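(* Let $n\ge 2$. There is a constant $c'_n>0$ such that for all sufficiently large $B$, the number of $n\times n$ integer matrices with all entries bounded in absolute value by $B$ whose characteristic polynomial has a linear factor over $\mathbb{Z}$ is at least $c'_n B^{n^2-n+1}\log B$. *)

theory Defs
  imports Complex_Main "Jordan_Normal_Form.Char_Poly"
begin

end

theory Submission
  imports Defs "HOL-Number_Theory.Totient" "HOL-Library.FuncSet"
begin

(*
  If every row of an integer matrix F is orthogonal to a nonzero vector v, then lam is an
  eigenvalue of F + lam I, so x - lam divides its characteristic polynomial.  Fix v with
  v(0) = d, v(n-1) coprime to d and |v(j)| <= d, and confine the coordinates j >= 1 of row i
  to a box of side K: [nK, nK + K] on the diagonal, [-K, 0] elsewhere.  Choosing coordinates
  1, ..., n-2 freely and coordinate n-1 in the residue class mod d that makes coordinate 0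
  integral gives at least (K+1)^(n-1) / 2d rows.  Summing over 0 <= lam <= K, d <= K+1 and v
  yields about K^(n^2-n+1) * sum_d phi(d)/d^2, i.e. at least a constant times
  K^(n^2-n+1) log K, parameters.
  The boxes make columns 1, ..., n-1 of F strictly diagonally dominant, so F determines v,
  and a matrix determines lam up to the n roots of its characteristic polynomial.  Hence at
  most n parameters give the same matrix; its entries are bounded by 2n^2 K, and we take
  K = floor (B / 2n^2).
*)

section \<open>Averages of the totient function\<close>

lemma sum_inverse_squares_le_2: "(\<Sum>m=1..M. 1 / real m ^ 2) \<le> 2"
proof -
  \<comment> \<open>For \<open>M = 0\<close> the bound holds because \<open>1 / real 0 = 0\<close>.\<close>
  have bound: "(\<Sum>m=1..M. 1 / real m ^ 2) \<le> 2 - 1 / real M" for M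
  proof (induction M)
    case (Suc M)
    have "1 / real (Suc M) ^ 2 \<le> 1 / real M - 1 / real (Suc M)" if "M \<ge> 1"
    proof -
      have "1 / real (Suc M) ^ 2 \<le> 1 / (real M * real (Suc M))"
        using that by (intro divide_left_mono mult_pos_pos) (auto simp: power2_eq_square)
      also have "\<dots> = 1 / real M - 1 / real (Suc M)"
        using that by (simp add: field_simps)
      finally show ?thesis .
    qed
    with Suc show ?case by (cases "M = 0") auto
  qed simp
  show ?thesis by (rule order_trans[OF bound]) simp
qed

lemma sum_inverse_squares_multiples:
  assumes "d \<ge> 1"
  shows "(\<Sum>k | k \<in> {1..X} \<and> d dvd k. 1 / real k ^ 2) \<le> 2 / real d ^ 2"
proof -
  have "{k. k \<in> {1..X} \<and> d dvd k} \<subseteq> (\<lambda>m. d * m) ` {1..X}"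
  proof
    fix k assume "k \<in> {k. k \<in> {1..X} \<and> d dvd k}"
    then obtain m where m: "k = d * m" "1 \<le> k" "k \<le> X" by (auto elim: dvdE)
    have "m \<le> X" using m(3) assms unfolding m(1) by (metis mult_le_mono1 mult_1 le_trans)
    with m show "k \<in> (\<lambda>m. d * m) ` {1..X}" by (intro image_eqI[where x = m]) auto
  qed
  then have "(\<Sum>k | k \<in> {1..X} \<and> d dvd k. 1 / real k ^ 2) \<le> (\<Sum>k \<in> (\<lambda>m. d * m) ` {1..X}. 1 / real k ^ 2)"
    by (intro sum_mono2) auto
  also have "\<dots> = (\<Sum>m=1..X. 1 / real m ^ 2) / real d ^ 2"
    using assms by (subst sum.reindex) (auto simp: inj_on_def sum_divide_distrib power_mult_distrib ac_simps)
  also have "\<dots> \<le> 2 / real d ^ 2"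
    by (intro divide_right_mono sum_inverse_squares_le_2) simp
  finally show ?thesis .
qed

lemma ln_le_harmonic: "ln (real X + 1) \<le> (\<Sum>k=1..X. 1 / real k)"
proof (induction X)
  case (Suc X)
  have "real (Suc X) + 1 = (real X + 1) * (1 + 1 / (real X + 1))"
    by (simp add: field_simps)
  then have "ln (real (Suc X) + 1) = ln (real X + 1) + ln (1 + 1 / (real X + 1))"
    by (simp add: ln_mult_pos add_pos_nonneg)
  also have "ln (1 + 1 / (real X + 1)) \<le> 1 / (real X + 1)"
    by (rule ln_add_one_self_le_self) simp
  finally show ?case using Suc by (simp add: add.commute)
qed simp

lemma harmonic_le_sum_totient: "(\<Sum>k=1..X. 1 / real k) \<le> 2 * (\<Sum>d=1..X. real (totient d) / real d ^ 2)"
proof -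
  \<comment> \<open>Write \<open>1/k = (\<Sum>d dvd k. \<phi>(d)) / k\<^sup>2\<close>, swap the sums and bound the sum over multiples of \<open>d\<close>.\<close>
  have inv_eq: "1 / real k = (\<Sum>d | d \<in> {1..X} \<and> d dvd k. real (totient d) / real k ^ 2)"
    if "k \<in> {1..X}" for k
  proof -
    have "{d. d dvd k} = {d. d \<in> {1..X} \<and> d dvd k}"
      using that by (auto dest: dvd_imp_le intro: Nat.gr0I)
    then have "real k = (\<Sum>d | d \<in> {1..X} \<and> d dvd k. real (totient d))"
      using totient_divisor_sum[of k] by (metis of_nat_sum)
    then show ?thesis
      using that by (simp add: sum_divide_distrib[symmetric] power2_eq_square)
  qed
  have "(\<Sum>k=1..X. 1 / real k) = (\<Sum>k=1..X. \<Sum>d | d \<in> {1..X} \<and> d dvd k. real (totient d) / real k ^ 2)"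
    by (intro sum.cong refl inv_eq)
  also have "\<dots> = (\<Sum>d=1..X. real (totient d) * (\<Sum>k | k \<in> {1..X} \<and> d dvd k. 1 / real k ^ 2))"
    by (subst sum.swap_restrict) (auto simp: sum_distrib_left)
  also have "\<dots> \<le> (\<Sum>d=1..X. real (totient d) * (2 / real d ^ 2))"
    by (intro sum_mono mult_left_mono sum_inverse_squares_multiples) auto
  also have "\<dots> = 2 * (\<Sum>d=1..X. real (totient d) / real d ^ 2)"
    by (simp add: sum_distrib_left ac_simps)
  finally show ?thesis .
qed

lemma ln_le_sum_totient: "ln (real X + 1) / 2 \<le> (\<Sum>d=1..X. real (totient d) / real d ^ 2)"
  using ln_le_harmonic[of X] harmonic_le_sum_totient[of X] by simp

section \<open>Lattice points on a hyperplane in a box\<close>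

lemma card_congruent_in_interval:
  fixes a c d K :: int
  assumes "d > 0"
  shows "(K + 1) div d \<le> int (card {z \<in> {a..a + K}. d dvd z - c})"
proof -
  define q where "q = (K + 1) div d"
  define g where "g t = a + (c - a) mod d + d * t" for t
  have dq: "d * q \<le> K + 1"
    using mult_div_mod_eq[of d "K + 1"] pos_mod_sign[OF assms, of "K + 1"]
    unfolding q_def by linarith
  have "g t \<in> {z \<in> {a..a + K}. d dvd z - c}" if t: "t \<in> {0..<q}" for t
  proof -
    have r: "0 \<le> (c - a) mod d" "(c - a) mod d < d" using assms by simp_all
    have "d * t \<le> d * (q - 1)" using t assms by (intro mult_left_mono) auto
    then have "g t \<le> a + K" using r dq unfolding g_def by (simp add: algebra_simps)
    moreover have "a \<le> g t" using r t assms unfolding g_def by simp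
    moreover have "g t - c = d * (t - (c - a) div d)"
      using div_mult_mod_eq[of "c - a" d] unfolding g_def by (simp add: algebra_simps)
    ultimately show ?thesis by simp
  qed
  moreover have "finite {z \<in> {a..a + K}. d dvd z - c}" by (rule finite_subset[of _ "{a..a + K}"]) auto
  ultimately have "card (g ` {0..<q}) \<le> card {z \<in> {a..a + K}. d dvd z - c}"
    by (intro card_mono) auto
  moreover have "inj_on g {0..<q}"
    using assms unfolding g_def by (auto simp: inj_on_def)
  ultimately have "card {0..<q} \<le> card {z \<in> {a..a + K}. d dvd z - c}"
    by (simp add: card_image)
  then show ?thesis unfolding q_def by (simp add: nat_le_iff)
qed

definition box_points :: "nat \<Rightarrow> (nat \<Rightarrow> int) \<Rightarrow> int \<Rightarrow> (nat \<Rightarrow> int) \<Rightarrow> (nat \<Rightarrow> int) set" where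
  "box_points n l K v = {x \<in> extensional {..<n}.
     (\<forall>j\<in>{1..<n}. x j \<in> {l j..l j + K}) \<and> (\<Sum>j<n. x j * v j) = 0}"

lemma finite_box_points:
  assumes "v 0 \<noteq> 0"
  shows "finite (box_points n l K v)"
proof (rule finite_imageD)
  have "(\<lambda>x. restrict x {1..<n}) ` box_points n l K v \<subseteq> PiE {1..<n} (\<lambda>j. {l j..l j + K})"
    unfolding box_points_def by auto
  then show "finite ((\<lambda>x. restrict x {1..<n}) ` box_points n l K v)"
    by (rule finite_subset) (intro finite_PiE; simp)
  show "inj_on (\<lambda>x. restrict x {1..<n}) (box_points n l K v)"
  proof (rule inj_onI)
    fix x y assume x: "x \<in> box_points n l K v" and y: "y \<in> box_points n l K v"
      and eq: "restrict x {1..<n} = restrict y {1..<n}"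
    have tail: "x j = y j" if "j \<in> {1..<n}" for j
      using fun_cong[OF eq, of j] that by simp
    have "x 0 = y 0" if "n > 0"
    proof -
      have split: "(\<Sum>j<n. g j) = g 0 + (\<Sum>j\<in>{1..<n}. g j)" for g :: "nat \<Rightarrow> int"
        using that by (simp add: atLeast1_lessThan_eq_remove0 sum.remove)
      have "(\<Sum>j\<in>{1..<n}. x j * v j) = (\<Sum>j\<in>{1..<n}. y j * v j)"
        using tail by simp
      moreover have "x 0 * v 0 + (\<Sum>j\<in>{1..<n}. x j * v j) = 0"
        "y 0 * v 0 + (\<Sum>j\<in>{1..<n}. y j * v j) = 0"
        using x y split[of "\<lambda>j. x j * v j"] split[of "\<lambda>j. y j * v j"]
        unfolding box_points_def by simp_all
      ultimately have "x 0 * v 0 = y 0 * v 0" by linarith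
      then show ?thesis using assms by simp
    qed
    with tail have "x j = y j" if "j < n" for j
      using that by (cases "j = 0") auto
    then show "x = y"
      using x y unfolding box_points_def by (intro extensionalityI[of _ "{..<n}"]) auto
  qed
qed

lemma completion_mem_box_points:
  fixes n :: nat and v l y :: "nat \<Rightarrow> int" and z K :: int
  defines "s \<equiv> (\<Sum>j\<in>{1..<n-1}. y j * v j) + z * v (n - 1)"
  assumes n: "n \<ge> 2" and v0: "v 0 \<noteq> 0" and dvd: "v 0 dvd s"
    and y: "y \<in> PiE {1..<n-1} (\<lambda>j. {l j..l j + K})" and z: "z \<in> {l (n-1)..l (n-1) + K}"
  shows "(y(n - 1 := z))(0 := - (s div v 0)) \<in> box_points n l K v"
proof -
  define x where "x = (y(n - 1 := z))(0 := - (s div v 0))"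
  have dom: "{..<n} = insert 0 (insert (n - 1) {1..<n-1})" using n by auto
  have "x \<in> extensional {..<n}"
    using y n PiE_arb[OF y] unfolding x_def by (auto simp: extensional_def)
  moreover have "\<forall>j\<in>{1..<n}. x j \<in> {l j..l j + K}"
    using y z unfolding x_def by (auto simp: PiE_iff)
  moreover have "(\<Sum>j<n. x j * v j) = - (s div v 0) * v 0 + s"
  proof -
    have "(\<Sum>j\<in>{1..<n-1}. x j * v j) = (\<Sum>j\<in>{1..<n-1}. y j * v j)"
      unfolding x_def by (intro sum.cong) auto
    then show ?thesis
      unfolding dom using n by (simp add: x_def s_def)
  qed
  moreover have "- (s div v 0) * v 0 + s = 0"
    using dvd by simp
  ultimately show ?thesis
    unfolding box_points_def x_def by simp
qed

lemma card_Sigma_box_congruent_ge: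
  fixes l :: "nat \<Rightarrow> int" and c :: "(nat \<Rightarrow> int) \<Rightarrow> int" and a d K :: int
  assumes J: "finite J" and d: "d > 0" and K: "K \<ge> 0"
  shows "(K + 1) ^ card J * ((K + 1) div d)
    \<le> int (card (SIGMA y:PiE J (\<lambda>j. {l j..l j + K}). {z \<in> {a..a + K}. d dvd z - c y}))"
proof -
  define P where "P = PiE J (\<lambda>j. {l j..l j + K})"
  define R where "R y = {z \<in> {a..a + K}. d dvd z - c y}" for y
  have "finite P" unfolding P_def using J by (intro finite_PiE) auto
  moreover have "finite (R y)" for y
    unfolding R_def by (rule finite_subset[of _ "{a..a + K}"]) auto
  ultimately have card_Sigma: "int (card (Sigma P R)) = (\<Sum>y\<in>P. int (card (R y)))"
    by (simp add: card_SigmaI)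
  have "card P = nat (K + 1) ^ card J"
    unfolding P_def using J by (simp add: card_PiE)
  then have "(K + 1) ^ card J * ((K + 1) div d) = (\<Sum>y\<in>P. (K + 1) div d)"
    using K by simp
  also have "\<dots> \<le> int (card (Sigma P R))"
    unfolding card_Sigma R_def using d by (intro sum_mono card_congruent_in_interval)
  finally show ?thesis
    unfolding P_def R_def .
qed

lemma dvd_add_mult_by_inverse:
  fixes b d s u w z :: int
  assumes inv: "u * b + w * d = 1" and "d dvd z + s * u"
  shows "d dvd s + z * b"
proof -
  obtain k where "z + s * u = d * k"
    using assms(2) by (elim dvdE)
  then have "z = d * k - s * u" by simp
  then have "s + z * b = s * (u * b + w * d) + (d * k - s * u) * b"
    unfolding inv by simp
  also have "\<dots> = d * (s * w + k * b)"
    by (simp add: algebra_simps)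
  finally show ?thesis by simp
qed

lemma card_box_points_ge:
  fixes v l :: "nat \<Rightarrow> int" and K :: int
  assumes n: "n \<ge> 2" and K: "K \<ge> 0" and v0: "v 0 > 0" and cop: "coprime (v (n - 1)) (v 0)"
  shows "(K + 1) ^ (n - 2) * ((K + 1) div v 0) \<le> int (card (box_points n l K v))"
proof -
  define d where "d = v 0"
  \<comment> \<open>\<open>u\<close> inverts \<open>v (n - 1)\<close> modulo \<open>d\<close>: taking coordinate \<open>n - 1\<close> congruent to \<open>- s y * u\<close>
     makes \<open>d\<close> divide the rest of the hyperplane equation, which then fixes coordinate 0.\<close>
  obtain u w where uw: "u * v (n - 1) + w * d = 1"
    using bezout_int[of "v (n - 1)" d] cop unfolding d_def by auto
  define s where "s y = (\<Sum>j\<in>{1..<n-1}. y j * v j)" for y :: "nat \<Rightarrow> int"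
  define P where "P = PiE {1..<n-1} (\<lambda>j. {l j..l j + K})"
  define R where "R y = {z \<in> {l (n-1)..l (n-1) + K}. d dvd z - (- s y * u)}" for y
  define G where "G = (\<lambda>(y, z). (y(n - 1 := z))(0 := - ((s y + z * v (n - 1)) div d)))"
  have "G ` Sigma P R \<subseteq> box_points n l K v"
  proof clarify
    fix y z assume y: "y \<in> P" and z: "z \<in> R y"
    then have "d dvd s y + z * v (n - 1)"
      using dvd_add_mult_by_inverse[OF uw] unfolding R_def by simp
    then show "G (y, z) \<in> box_points n l K v"
      using completion_mem_box_points[OF n, of v "\<lambda>j. y j" z l K] y z v0
      unfolding G_def P_def R_def s_def d_def by auto
  qed
  moreover have "inj_on G (Sigma P R)"
  proof (rule inj_onI)
    fix p p' assume p: "p \<in> Sigma P R" and p': "p' \<in> Sigma P R" and eq: "G p = G p'"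
    obtain y z y' z' where pp: "p = (y, z)" "p' = (y', z')" by (cases p, cases p')
    have yy: "y j = y' j" if "j \<in> {1..<n-1}" for j
      using fun_cong[OF eq, of j] that unfolding G_def pp by auto
    have "y \<in> P" "y' \<in> P" using p p' unfolding pp by auto
    then have "y = y'"
      unfolding P_def by (rule PiE_ext) (rule yy)
    moreover have "z = z'"
      using fun_cong[OF eq, of "n - 1"] n unfolding G_def pp by auto
    ultimately show "p = p'" unfolding pp by simp
  qed
  moreover have "finite (box_points n l K v)"
    using v0 by (intro finite_box_points) simp
  ultimately have "card (Sigma P R) \<le> card (box_points n l K v)"
    by (intro card_inj_on_le)
  moreover have "(K + 1) ^ (n - 2) * ((K + 1) div d) \<le> int (card (Sigma P R))"
    using card_Sigma_box_congruent_ge[of "{1..<n-1}" d K l "l (n - 1)" "\<lambda>y. - s y * u"] v0 K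
    unfolding P_def R_def d_def by (simp add: numeral_2_eq_2)
  ultimately show ?thesis
    unfolding d_def by linarith
qed

section \<open>Eigenvalues and kernels of integer matrices\<close>

lemma diag_dominant_kernel_zero:
  fixes M :: "'i \<Rightarrow> 'i \<Rightarrow> 'a :: linordered_idom"
  assumes I: "finite I"
    and dom: "\<And>i. i \<in> I \<Longrightarrow> (\<Sum>j\<in>I - {i}. \<bar>M i j\<bar>) < \<bar>M i i\<bar>"
    and ker: "\<And>i. i \<in> I \<Longrightarrow> (\<Sum>j\<in>I. M i j * u j) = 0"
    and j: "j \<in> I"
  shows "u j = 0"
proof (rule ccontr)
  assume "u j \<noteq> 0"
  define m where "m = Max ((\<lambda>k. \<bar>u k\<bar>) ` I)"
  have "m \<in> (\<lambda>k. \<bar>u k\<bar>) ` I"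
    unfolding m_def using I j by (intro Max_in) auto
  then obtain i where i: "i \<in> I" "\<bar>u i\<bar> = m" by auto
  have le_m: "\<bar>u k\<bar> \<le> m" if "k \<in> I" for k
    unfolding m_def using I that by (intro Max_ge) auto
  have "0 < \<bar>u j\<bar>" using \<open>u j \<noteq> 0\<close> by simp
  with le_m[OF j] have m_pos: "0 < m" by simp
  have "M i i * u i = - (\<Sum>k\<in>I - {i}. M i k * u k)"
    using ker[OF i(1)] I i(1) by (simp add: sum.remove eq_neg_iff_add_eq_0)
  then have "\<bar>M i i\<bar> * \<bar>u i\<bar> = \<bar>\<Sum>k\<in>I - {i}. M i k * u k\<bar>"
    by (simp add: abs_mult[symmetric])
  then have "\<bar>M i i\<bar> * m = \<bar>\<Sum>k\<in>I - {i}. M i k * u k\<bar>"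
    using i(2) by simp
  also have "\<dots> \<le> (\<Sum>k\<in>I - {i}. \<bar>M i k\<bar> * m)"
    by (rule order_trans[OF sum_abs sum_mono]) (auto simp: abs_mult intro: mult_left_mono le_m)
  also have "\<dots> < \<bar>M i i\<bar> * m"
    using dom[OF i(1)] m_pos by (simp add: sum_distrib_right[symmetric])
  finally show False by simp
qed

lemma eigenvector_imp_root_char_poly:
  fixes A :: "'a :: idom mat"
  assumes A: "A \<in> carrier_mat n n" and ev: "eigenvector A w k"
  shows "poly (char_poly A) k = 0"
proof -
  define M where "M = mat n n (\<lambda>(i, j). (if i = j then k else 0) - A $$ (i, j))"
  have M: "M \<in> carrier_mat n n" unfolding M_def by simp
  have "poly (char_poly A) k = det M"
    unfolding char_poly_def
    by (rule poly_det_cong[OF M char_poly_matrix_closed[OF A]])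
       (use A in \<open>auto simp: char_poly_matrix_def M_def\<close>)
  moreover have "det M = 0"
  proof -
    have w: "w \<in> carrier_vec n" "w \<noteq> 0\<^sub>v n" and Aw: "A *\<^sub>v w = k \<cdot>\<^sub>v w"
      using ev A unfolding eigenvector_def by auto
    have "M *\<^sub>v w = 0\<^sub>v n"
    proof (rule eq_vecI)
      fix i assume "i < dim_vec (0\<^sub>v n :: 'a vec)"
      then have i: "i < n" by simp
      have "(M *\<^sub>v w) $ i = (\<Sum>j<n. (if i = j then k else 0) * w $ j) - (\<Sum>j<n. A $$ (i, j) * w $ j)"
        using i w unfolding M_def
        by (simp add: scalar_prod_def atLeast0LessThan left_diff_distrib sum_subtractf)
      also have "(\<Sum>j<n. (if i = j then k else 0) * w $ j) = k * w $ i"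
        using i by (simp add: if_distrib[of "\<lambda>x. x * _"] cong: if_cong)
      also have "(\<Sum>j<n. A $$ (i, j) * w $ j) = (A *\<^sub>v w) $ i"
        using i A w by (simp add: scalar_prod_def atLeast0LessThan)
      finally show "(M *\<^sub>v w) $ i = 0\<^sub>v n $ i"
        using i w Aw by simp
    qed (simp add: M_def)
    then show ?thesis using det_0_iff_vec_prod_zero[OF M] w by blast
  qed
  ultimately show ?thesis by simp
qed

definition shift_mat :: "nat \<Rightarrow> int \<Rightarrow> (nat \<Rightarrow> nat \<Rightarrow> int) \<Rightarrow> int mat" where
  "shift_mat n lam f = mat n n (\<lambda>(i, j). f i j + (if i = j then lam else 0))"

lemma root_char_poly_shift_mat:
  assumes w: "w \<in> carrier_vec n" "w \<noteq> 0\<^sub>v n"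
    and ker: "\<And>i. i < n \<Longrightarrow> (\<Sum>j<n. f i j * w $ j) = 0"
  shows "poly (char_poly (shift_mat n lam f)) lam = 0"
proof (rule eigenvector_imp_root_char_poly)
  show "shift_mat n lam f \<in> carrier_mat n n" unfolding shift_mat_def by simp
  have "shift_mat n lam f *\<^sub>v w = lam \<cdot>\<^sub>v w"
  proof (rule eq_vecI)
    fix i assume "i < dim_vec (lam \<cdot>\<^sub>v w)"
    then have i: "i < n" using w by simp
    have "(shift_mat n lam f *\<^sub>v w) $ i = (\<Sum>j<n. f i j * w $ j) + lam * w $ i"
      using i w unfolding shift_mat_def
      by (simp add: scalar_prod_def atLeast0LessThan distrib_right sum.distrib
          if_distrib[of "\<lambda>x. x * _"] cong: if_cong)
    then show "(shift_mat n lam f *\<^sub>v w) $ i = (lam \<cdot>\<^sub>v w) $ i"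
      using ker[OF i] i w by simp
  qed (use w in \<open>simp add: shift_mat_def\<close>)
  then show "eigenvector (shift_mat n lam f) w lam"
    using w unfolding eigenvector_def shift_mat_def by simp
qed

section \<open>The parametrised family of matrices\<close>

definition test_vectors :: "nat \<Rightarrow> nat \<Rightarrow> (nat \<Rightarrow> int) set" where
  "test_vectors n d = PiE {..<n} (\<lambda>j. if j = 0 then {int d}
     else if j = n - 1 then int ` totatives d else {- int d..int d})"

lemma finite_test_vectors: "finite (test_vectors n d)"
  unfolding test_vectors_def by (intro finite_PiE) auto

lemma card_test_vectors:
  assumes "n \<ge> 2"
  shows "card (test_vectors n d) = totient d * (2 * d + 1) ^ (n - 2)"
proof -
  have dom: "{..<n} = insert 0 (insert (n - 1) {1..<n-1})" using assms by auto
  have "card (test_vectors n d) = (\<Prod>j<n. card (if j = 0 then {int d}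
     else if j = n - 1 then int ` totatives d else {- int d..int d}))"
    unfolding test_vectors_def by (rule card_PiE) simp
  also have "\<dots> = card (int ` totatives d) * (\<Prod>j\<in>{1..<n-1}. card {- int d..int d})"
    unfolding dom using assms by (simp add: prod.cong[of "{1..<n-1}", OF refl])
  also have "card {- int d..int d} = 2 * d + 1" by simp
  also have "card (int ` totatives d) = totient d" by (simp add: card_image totient_def)
  finally show ?thesis by (simp add: numeral_2_eq_2)
qed

lemma test_vectorsD:
  assumes "v \<in> test_vectors n d" and "n \<ge> 2"
  shows "v 0 = int d" and "d > 0" and "coprime (v (n - 1)) (int d)"
    and "\<And>j. j < n \<Longrightarrow> \<bar>v j\<bar> \<le> int d" and "v \<in> extensional {..<n}"
proof -
  have entry: "v j \<in> (if j = 0 then {int d} else if j = n - 1 then int ` totatives d else {- int d..int d})"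
    if "j < n" for j
    using PiE_mem[OF assms(1)[unfolded test_vectors_def], of j] that by simp
  show "v 0 = int d" using entry[of 0] assms by simp
  from entry[of "n - 1"] assms obtain k where k: "v (n - 1) = int k" "k \<in> totatives d" by auto
  then show "d > 0" "coprime (v (n - 1)) (int d)"
    by (auto simp: in_totatives_iff)
  show "\<bar>v j\<bar> \<le> int d" if "j < n" for j
  proof (cases "j = 0 \<or> j = n - 1")
    case True
    then show ?thesis using entry[OF that] k by (auto simp: in_totatives_iff)
  next
    case False
    then show ?thesis using entry[OF that] by auto
  qed
  show "v \<in> extensional {..<n}"
    using assms(1) unfolding test_vectors_def by (simp add: PiE_def)
qed

definition row_low :: "nat \<Rightarrow> int \<Rightarrow> nat \<Rightarrow> nat \<Rightarrow> int" where
  "row_low n K i j = (if j = i then int n * K else - K)"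

lemma row_box_entries:
  assumes x: "x \<in> box_points n (row_low n K i) K v" and j: "j \<in> {1..<n}"
  shows row_box_diag: "j = i \<Longrightarrow> int n * K \<le> x j"
    and row_box_off_diag: "j \<noteq> i \<Longrightarrow> \<bar>x j\<bar> \<le> K"
    and row_box_abs_le: "K \<ge> 0 \<Longrightarrow> \<bar>x j\<bar> \<le> (int n + 1) * K"
proof -
  have box: "row_low n K i j \<le> x j" "x j \<le> row_low n K i j + K"
    using x j unfolding box_points_def by auto
  show "j = i \<Longrightarrow> int n * K \<le> x j" using box by (simp add: row_low_def)
  show "j \<noteq> i \<Longrightarrow> \<bar>x j\<bar> \<le> K" using box by (simp add: row_low_def)
  show "\<bar>x j\<bar> \<le> (int n + 1) * K" if K: "K \<ge> 0"
  proof -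
    have nK: "0 \<le> int n * K" using K by simp
    have "- K \<le> x j \<and> x j \<le> int n * K + K"
    proof (cases "j = i")
      case True
      then have "int n * K \<le> x j" "x j \<le> int n * K + K" using box by (simp_all add: row_low_def)
      with nK K show ?thesis by linarith
    next
      case False
      then have "- K \<le> x j" "x j \<le> 0" using box by (simp_all add: row_low_def)
      with nK K show ?thesis by linarith
    qed
    then show ?thesis
      unfolding abs_le_iff distrib_right mult_1 using nK by linarith
  qed
qed

lemma row_box_diag_dominant:
  assumes K: "K \<ge> 1" and i: "i \<in> {1..<n}" and x: "x \<in> box_points n (row_low n K i) K v"
  shows "(\<Sum>j\<in>{1..<n} - {i}. \<bar>x j\<bar>) < \<bar>x i\<bar>"
proof -
  have "(\<Sum>j\<in>{1..<n} - {i}. \<bar>x j\<bar>) \<le> (\<Sum>j\<in>{1..<n} - {i}. K)"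
    using row_box_off_diag[OF x] by (intro sum_mono) auto
  also have "\<dots> = (int n - 2) * K"
    using i by (simp add: of_nat_diff)
  also have "\<dots> < int n * K" using K by simp
  also have "\<dots> \<le> \<bar>x i\<bar>" using row_box_diag[OF x i] by simp
  finally show ?thesis .
qed

lemma box_points_row_low_bound:
  assumes n: "n \<ge> 2" and K: "K \<ge> 0" and v: "v \<in> test_vectors n d"
    and x: "x \<in> box_points n (row_low n K i) K v" and j: "j < n"
  shows "\<bar>x j\<bar> \<le> int n ^ 2 * K"
proof -
  note tv = test_vectorsD[OF v n]
  have tail: "\<bar>x k\<bar> \<le> (int n + 1) * K" if "k \<in> {1..<n}" for k
    using row_box_abs_le[OF x that K] .
  have "int n * 2 \<le> int n * int n" using n by (intro mult_left_mono) auto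
  with n have "int n + 1 \<le> int n ^ 2" unfolding power2_eq_square by linarith
  then have "(int n + 1) * K \<le> int n ^ 2 * K" using K by (rule mult_right_mono)
  show ?thesis
  proof (cases "j = 0")
    case False
    then show ?thesis using tail[of j] j \<open>_ \<le> int n ^ 2 * K\<close> by simp
  next
    case True
    have "{..<n} = insert 0 {1..<n}" using n by auto
    then have "int d * x 0 + (\<Sum>k\<in>{1..<n}. x k * v k) = 0"
      using x tv(1) unfolding box_points_def by (simp add: mult.commute)
    then have "int d * x 0 = - (\<Sum>k\<in>{1..<n}. x k * v k)" by linarith
    then have "\<bar>int d * x 0\<bar> = \<bar>\<Sum>k\<in>{1..<n}. x k * v k\<bar>" by simp
    then have "int d * \<bar>x 0\<bar> = \<bar>\<Sum>k\<in>{1..<n}. x k * v k\<bar>"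
      by (simp add: abs_mult)
    also have "\<dots> \<le> (\<Sum>k\<in>{1..<n}. (int n + 1) * K * int d)"
      using tail tv(4) K by (intro order_trans[OF sum_abs sum_mono])
        (auto simp: abs_mult intro!: mult_mono)
    also have "\<dots> = int d * ((int n - 1) * (int n + 1) * K)"
      using n by (simp add: of_nat_diff algebra_simps)
    finally have "\<bar>x 0\<bar> \<le> (int n - 1) * (int n + 1) * K"
      using tv(2) by simp
    also have "\<dots> \<le> int n ^ 2 * K"
      using K by (simp add: algebra_simps power2_eq_square)
    finally show ?thesis using True by simp
  qed
qed

lemma test_vectors_unique:
  assumes n: "n \<ge> 2" and K: "K \<ge> 1"
    and v: "v \<in> test_vectors n d" and v': "v' \<in> test_vectors n d'"
    and rows: "\<And>i. i \<in> {1..<n} \<Longrightarrow>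
      f i \<in> box_points n (row_low n K i) K v \<inter> box_points n (row_low n K i) K v'"
  shows "v = v'"
proof -
  define u where "u j = int d' * v j - int d * v' j" for j
  note tv = test_vectorsD[OF v n] and tv' = test_vectorsD[OF v' n]
  have dom: "{..<n} = insert 0 {1..<n}" using n by auto
  have ker: "(\<Sum>j\<in>{1..<n}. f i j * u j) = 0" if i: "i \<in> {1..<n}" for i
  proof -
    have "(\<Sum>j<n. f i j * v j) = 0" "(\<Sum>j<n. f i j * v' j) = 0"
      using rows[OF i] unfolding box_points_def by auto
    then have "(\<Sum>j<n. f i j * u j) = 0"
      unfolding u_def by (simp add: algebra_simps sum_subtractf sum_distrib_left[symmetric])
    then show ?thesis
      unfolding dom u_def using tv(1) tv'(1) by simp
  qed
  have "(\<Sum>j\<in>{1..<n} - {i}. \<bar>f i j\<bar>) < \<bar>f i i\<bar>" if "i \<in> {1..<n}" for i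
    using row_box_diag_dominant[OF K that] rows[OF that] by blast
  note u0 = diag_dominant_kernel_zero[OF finite_atLeastLessThan this ker]
  have "int d' * v (n - 1) = int d * v' (n - 1)"
    using u0[of "n - 1"] n unfolding u_def by simp
  then have "int d dvd int d' * v (n - 1)" and "int d' dvd int d * v' (n - 1)"
    by (metis dvd_triv_left)+
  then have "int d dvd int d'" and "int d' dvd int d"
    using tv(3) tv'(3) by (simp_all add: coprime_commute coprime_dvd_mult_left_iff)
  then have dd: "d = d'" by (simp add: dvd_antisym)
  have "v j = v' j" if "j < n" for j
    using u0[of j] that tv(1,2) tv'(1) unfolding u_def dd by (cases "j = 0") auto
  then show ?thesis
    using tv(5) tv'(5) by (intro extensionalityI[of _ "{..<n}"]) auto
qed

definition params :: "nat \<Rightarrow> int \<Rightarrow> (int \<times> nat \<times> (nat \<Rightarrow> int) \<times> (nat \<Rightarrow> nat \<Rightarrow> int)) set" where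
  "params n K = (SIGMA lam:{0..K}. SIGMA d:{1..nat (K + 1)}. SIGMA v:test_vectors n d.
     PiE {..<n} (\<lambda>i. box_points n (row_low n K i) K v))"

definition param_mat :: "nat \<Rightarrow> int \<times> nat \<times> (nat \<Rightarrow> int) \<times> (nat \<Rightarrow> nat \<Rightarrow> int) \<Rightarrow> int mat" where
  "param_mat n = (\<lambda>(lam, d, v, f). shift_mat n lam f)"

lemma finite_row_boxes:
  assumes "v \<in> test_vectors n d" and "n \<ge> 2"
  shows "finite (PiE {..<n} (\<lambda>i. box_points n (row_low n K i) K v))"
  using test_vectorsD(1,2)[OF assms] by (intro finite_PiE finite_box_points) auto

lemma finite_params: "n \<ge> 2 \<Longrightarrow> finite (params n K)"
  unfolding params_def by (intro finite_SigmaI finite_test_vectors finite_row_boxes) auto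

lemma root_char_poly_param_mat:
  assumes n: "n \<ge> 2" and p: "(lam, d, v, f) \<in> params n K"
  shows "poly (char_poly (param_mat n (lam, d, v, f))) lam = 0"
proof -
  have v: "v \<in> test_vectors n d" and f: "\<And>i. i < n \<Longrightarrow> f i \<in> box_points n (row_low n K i) K v"
    using p unfolding params_def by auto
  have nz: "vec n v \<noteq> 0\<^sub>v n"
  proof
    assume "vec n v = 0\<^sub>v n"
    then have "vec n v $ 0 = 0\<^sub>v n $ 0" by simp
    then show False using n test_vectorsD(1,2)[OF v n] by simp
  qed
  have ker: "(\<Sum>j<n. f i j * vec n v $ j) = 0" if "i < n" for i
    using f[OF that] unfolding box_points_def by simp
  show ?thesis
    unfolding param_mat_def using root_char_poly_shift_mat[OF vec_carrier nz ker] by simp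
qed

lemma param_mat_inj_on_fibre:
  assumes n: "n \<ge> 2" and K: "K \<ge> 1" and p: "p \<in> params n K" and p': "p' \<in> params n K"
    and eq: "param_mat n p = param_mat n p'" and lam: "fst p = fst p'"
  shows "p = p'"
proof -
  obtain lam d v f lam' d' v' f' where pp: "p = (lam, d, v, f)" "p' = (lam', d', v', f')"
    by (cases p, cases p') auto
  have v: "v \<in> test_vectors n d" and v': "v' \<in> test_vectors n d'"
    and f: "f \<in> PiE {..<n} (\<lambda>i. box_points n (row_low n K i) K v)"
    and f': "f' \<in> PiE {..<n} (\<lambda>i. box_points n (row_low n K i) K v')"
    using p p' unfolding pp params_def by auto
  have "f i j = f' i j" if "i < n" "j < n" for i j
    using arg_cong[OF eq, of "\<lambda>A. A $$ (i, j)"] lam that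
    unfolding pp param_mat_def shift_mat_def by (simp split: if_splits)
  then have "f i = f' i" if "i \<in> {..<n}" for i
    using PiE_mem[OF f that] PiE_mem[OF f' that] that
    unfolding box_points_def by (intro extensionalityI[of _ "{..<n}"]) auto
  then have ff: "f = f'"
    using f f' by (intro PiE_ext) auto
  then have "v = v'"
    using f f' by (intro test_vectors_unique[OF n K v v']) auto
  moreover have "d = d'"
    using test_vectorsD(1)[OF v n] test_vectorsD(1)[OF v' n] \<open>v = v'\<close> by simp
  ultimately show ?thesis using pp lam ff by simp
qed

lemma card_le_mult_card_image:
  assumes "finite A" and "\<And>y. y \<in> g ` A \<Longrightarrow> card {x \<in> A. g x = y} \<le> m"
  shows "card A \<le> m * card (g ` A)"
proof -
  have "card A = card (\<Union>y\<in>g ` A. {x \<in> A. g x = y})"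
    by (rule arg_cong[where f = card]) auto
  also have "\<dots> = (\<Sum>y\<in>g ` A. card {x \<in> A. g x = y})"
    using assms(1) by (intro card_UN_disjoint) auto
  also have "\<dots> \<le> (\<Sum>y\<in>g ` A. m)"
    by (intro sum_mono assms(2))
  finally show ?thesis by (simp add: mult.commute)
qed

lemma card_params_le:
  assumes n: "n \<ge> 2" and K: "K \<ge> 1"
  shows "card (params n K) \<le> n * card (param_mat n ` params n K)"
proof (rule card_le_mult_card_image[OF finite_params[OF n]])
  fix A assume "A \<in> param_mat n ` params n K"
  then have A: "A \<in> carrier_mat n n"
    by (auto simp: param_mat_def shift_mat_def)
  define F where "F = {p \<in> params n K. param_mat n p = A}"
  have nz: "char_poly A \<noteq> 0"
    using degree_monic_char_poly[OF A] by auto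
  have "inj_on fst F"
    using param_mat_inj_on_fibre[OF n K] unfolding F_def by (auto intro: inj_onI)
  then have "card F = card (fst ` F)" by (rule card_image[symmetric])
  also have "\<dots> \<le> card {x. poly (char_poly A) x = 0}"
  proof (rule card_mono[OF poly_roots_finite[OF nz]], clarify)
    fix lam d v f assume "(lam, d, v, f) \<in> F"
    then show "poly (char_poly A) (fst (lam, d, v, f)) = 0"
      using root_char_poly_param_mat[OF n] unfolding F_def by auto
  qed
  also have "\<dots> \<le> n"
    using card_poly_roots_bound[OF nz] degree_monic_char_poly[OF A] by simp
  finally show "card F \<le> n" .
qed

definition mats_with_linear_factor :: "nat \<Rightarrow> real \<Rightarrow> int mat set" where
  "mats_with_linear_factor n B = {A :: int mat. A \<in> carrier_mat n n \<and>
     (\<forall>i<n. \<forall>j<n. real_of_int \<bar>A $$ (i, j)\<bar> \<le> B) \<and>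
     (\<exists>q :: int poly. degree q = 1 \<and> q dvd char_poly A)}"

lemma finite_mats_with_linear_factor: "finite (mats_with_linear_factor n B)"
proof -
  define b where "b = \<lceil>B\<rceil>"
  have "mats_with_linear_factor n B \<subseteq>
      (\<lambda>g. mat n n (\<lambda>(i, j). g i j)) ` PiE {..<n} (\<lambda>_. PiE {..<n} (\<lambda>_. {-b..b}))"
  proof
    fix A assume A: "A \<in> mats_with_linear_factor n B"
    define g where "g = (\<lambda>i\<in>{..<n}. \<lambda>j\<in>{..<n}. A $$ (i, j))"
    have "A = mat n n (\<lambda>(i, j). g i j)"
      using A unfolding g_def mats_with_linear_factor_def by (intro eq_matI) auto
    moreover have "A $$ (i, j) \<in> {-b..b}" if "i < n" "j < n" for i j
    proof -
      have "real_of_int \<bar>A $$ (i, j)\<bar> \<le> B"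
        using A that unfolding mats_with_linear_factor_def by auto
      then have "\<bar>A $$ (i, j)\<bar> \<le> b" unfolding b_def by (metis ceiling_mono ceiling_of_int)
      then show ?thesis by (auto simp: abs_le_iff)
    qed
    then have "g \<in> PiE {..<n} (\<lambda>_. PiE {..<n} (\<lambda>_. {-b..b}))"
      unfolding g_def by (simp add: restrict_PiE_iff)
    ultimately show "A \<in> (\<lambda>g. mat n n (\<lambda>(i, j). g i j)) ` PiE {..<n} (\<lambda>_. PiE {..<n} (\<lambda>_. {-b..b}))"
      by blast
  qed
  then show ?thesis
    by (rule finite_subset) (intro finite_imageI finite_PiE; simp)
qed

lemma param_mat_mem_mats_with_linear_factor:
  assumes n: "n \<ge> 2" and K: "K \<ge> 0" and B: "real_of_int (2 * int n ^ 2 * K) \<le> B"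
    and p: "p \<in> params n K"
  shows "param_mat n p \<in> mats_with_linear_factor n B"
proof -
  obtain lam d v f where pp: "p = (lam, d, v, f)" by (cases p) auto
  have lam: "lam \<in> {0..K}" and v: "v \<in> test_vectors n d"
    and f: "\<And>i. i < n \<Longrightarrow> f i \<in> box_points n (row_low n K i) K v"
    using p unfolding pp params_def by auto
  have "\<bar>param_mat n p $$ (i, j)\<bar> \<le> 2 * int n ^ 2 * K" if "i < n" "j < n" for i j
  proof -
    have "\<bar>param_mat n p $$ (i, j)\<bar> \<le> \<bar>f i j\<bar> + \<bar>lam\<bar>"
      using that unfolding pp param_mat_def shift_mat_def by auto
    also have "\<dots> \<le> int n ^ 2 * K + int n ^ 2 * K"
    proof (intro add_mono)
      show "\<bar>f i j\<bar> \<le> int n ^ 2 * K"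
        using box_points_row_low_bound[OF n K v f] that by simp
      have "1 \<le> int n ^ 2" using n by simp
      then show "\<bar>lam\<bar> \<le> int n ^ 2 * K"
        using lam K mult_right_mono[of 1 "int n ^ 2" K] by simp
    qed
    also have "\<dots> = 2 * int n ^ 2 * K" by simp
    finally show ?thesis .
  qed
  then have "real_of_int \<bar>param_mat n p $$ (i, j)\<bar> \<le> B" if "i < n" "j < n" for i j
    using B that of_int_le_iff order_trans by blast
  moreover have "[:- lam, 1:] dvd char_poly (param_mat n p)"
    using root_char_poly_param_mat[OF n p[unfolded pp]] unfolding pp
    by (simp add: poly_eq_0_iff_dvd)
  ultimately show ?thesis
    unfolding mats_with_linear_factor_def pp param_mat_def shift_mat_def
    by (auto intro!: exI[of _ "[:- lam, 1:]"])
qed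

section \<open>Counting the parameters\<close>

lemma real_div_ge_half:
  fixes a b :: int
  assumes b: "0 < b" "b \<le> a"
  shows "real_of_int a / (2 * real_of_int b) \<le> real_of_int (a div b)"
proof -
  have "b div b \<le> a div b" using b by (intro zdiv_mono1) auto
  then have "1 \<le> a div b" using b by simp
  then have "b \<le> b * (a div b)" using mult_left_mono[of 1 "a div b" b] b by simp
  moreover have "a mod b < b" using b by simp
  ultimately have "a mod b < b * (a div b)" by linarith
  then have "a \<le> 2 * b * (a div b)"
    using mult_div_mod_eq[of b a] by linarith
  then have "real_of_int a \<le> real_of_int (2 * b * (a div b))"
    by (simp only: of_int_le_iff)
  then have "real_of_int a \<le> real_of_int (a div b) * (2 * real_of_int b)"
    by (simp add: ac_simps)
  then show ?thesis using b by (simp add: divide_le_eq)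
qed

lemma prod_card_row_boxes_ge:
  assumes n: "n \<ge> 2" and K: "K \<ge> 1" and d: "d \<in> {1..nat (K + 1)}" and v: "v \<in> test_vectors n d"
  shows "(real_of_int (K + 1) ^ (n - 1) / (2 * real d)) ^ n
    \<le> real (\<Prod>i<n. card (box_points n (row_low n K i) K v))"
proof -
  define r where "r = real_of_int (K + 1)"
  note tv = test_vectorsD[OF v n]
  have row: "r ^ (n - 1) / (2 * real d) \<le> real (card (box_points n (row_low n K i) K v))" for i
  proof -
    have "r ^ (n - 1) / (2 * real d) = r ^ (n - 2) * (r / (2 * real d))"
      using n by (simp add: r_def power_eq_if numeral_2_eq_2)
    also have "\<dots> \<le> r ^ (n - 2) * real_of_int ((K + 1) div int d)"
      using real_div_ge_half[of "int d" "K + 1"] d K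
      by (intro mult_left_mono) (auto simp: r_def)
    also have "\<dots> = real_of_int ((K + 1) ^ (n - 2) * ((K + 1) div v 0))"
      by (simp add: r_def tv(1))
    also have "\<dots> \<le> real_of_int (int (card (box_points n (row_low n K i) K v)))"
      using card_box_points_ge[OF n _ _ tv(3)[folded tv(1)], of K "row_low n K i"] tv(1,2) K
      by (simp only: of_int_le_iff)
    finally show ?thesis by simp
  qed
  have "(r ^ (n - 1) / (2 * real d)) ^ n = (\<Prod>i<n. r ^ (n - 1) / (2 * real d))"
    by simp
  also have "\<dots> \<le> (\<Prod>i<n. real (card (box_points n (row_low n K i) K v)))"
    using row K by (intro prod_mono) (auto simp: r_def)
  finally show ?thesis unfolding r_def by simp
qed

lemma sum_prod_card_row_boxes_ge:
  assumes n: "n \<ge> 2" and K: "K \<ge> 1" and d: "d \<in> {1..nat (K + 1)}"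
  shows "real_of_int (K + 1) ^ ((n - 1) * n) / 2 ^ n * (real (totient d) / real d ^ 2)
    \<le> (\<Sum>v\<in>test_vectors n d. real (\<Prod>i<n. card (box_points n (row_low n K i) K v)))"
proof -
  define r where "r = real_of_int (K + 1)"
  have r: "r > 0" using K by (simp add: r_def)
  have dpos: "real d > 0" using d by simp
  have "r ^ ((n - 1) * n) / 2 ^ n * (real (totient d) / real d ^ 2)
      = real (totient d) * real d ^ (n - 2) * (r ^ (n - 1) / (2 * real d)) ^ n"
  proof -
    have "n - 2 + 2 = n" using n by simp
    then have "real d ^ n = real d ^ (n - 2) * real d ^ 2" by (metis power_add)
    moreover have "(r ^ (n - 1)) ^ n = r ^ ((n - 1) * n)" by (simp add: power_mult)
    ultimately show ?thesis
      using dpos by (simp add: power_divide power_mult_distrib field_simps)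
  qed
  also have "\<dots> \<le> real (totient d) * (2 * real d + 1) ^ (n - 2) * (r ^ (n - 1) / (2 * real d)) ^ n"
    using dpos r by (intro mult_right_mono mult_left_mono power_mono) auto
  also have "\<dots> = (\<Sum>v\<in>test_vectors n d. (r ^ (n - 1) / (2 * real d)) ^ n)"
    using card_test_vectors[OF n, of d] by (simp add: add.commute)
  also have "\<dots> \<le> (\<Sum>v\<in>test_vectors n d. real (\<Prod>i<n. card (box_points n (row_low n K i) K v)))"
    unfolding r_def using prod_card_row_boxes_ge[OF n K d] by (intro sum_mono)
  finally show ?thesis unfolding r_def .
qed

lemma card_params_ge:
  assumes n: "n \<ge> 2" and K: "K \<ge> 1"
  shows "real_of_int (K + 1) ^ (n^2 - n + 1) * ln (real_of_int (K + 1) + 1) / 2 ^ (n + 1)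
    \<le> real (card (params n K))"
proof -
  define r where "r = real_of_int (K + 1)"
  define X where "X = nat (K + 1)"
  define rows where "rows v = real (\<Prod>i<n. card (box_points n (row_low n K i) K v))" for v
  have rX: "real X = r" using K by (simp add: r_def X_def)
  have "real (card (params n K)) = (\<Sum>lam\<in>{0..K}. \<Sum>d\<in>{1..X}. \<Sum>v\<in>test_vectors n d. rows v)"
    unfolding params_def rows_def X_def
    by (simp add: card_SigmaI finite_SigmaI finite_test_vectors card_PiE finite_box_points finite_row_boxes n)
  also have "\<dots> = r * (\<Sum>d\<in>{1..X}. \<Sum>v\<in>test_vectors n d. rows v)"
    using K by (simp add: r_def)
  finally have card_eq: "real (card (params n K)) = r * (\<Sum>d\<in>{1..X}. \<Sum>v\<in>test_vectors n d. rows v)" .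
  have "r ^ ((n - 1) * n) / 2 ^ n * (ln (r + 1) / 2)
      \<le> r ^ ((n - 1) * n) / 2 ^ n * (\<Sum>d=1..X. real (totient d) / real d ^ 2)"
    using ln_le_sum_totient[of X] K
    unfolding rX by (intro mult_left_mono) (auto simp: r_def)
  also have "\<dots> = (\<Sum>d=1..X. r ^ ((n - 1) * n) / 2 ^ n * (real (totient d) / real d ^ 2))"
    by (simp add: sum_distrib_left)
  also have "\<dots> \<le> (\<Sum>d\<in>{1..X}. \<Sum>v\<in>test_vectors n d. rows v)"
    unfolding rows_def r_def X_def by (intro sum_mono sum_prod_card_row_boxes_ge[OF n K])
  finally have "r * (r ^ ((n - 1) * n) / 2 ^ n * (ln (r + 1) / 2)) \<le> real (card (params n K))"
    unfolding card_eq using K by (intro mult_left_mono) (auto simp: r_def)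
  moreover have "n^2 - n + 1 = Suc ((n - 1) * n)"
    using n by (simp add: power2_eq_square diff_mult_distrib)
  ultimately show ?thesis
    unfolding r_def by (simp add: field_simps)
qed

lemma card_mats_with_linear_factor_ge:
  assumes n: "n \<ge> 2" and K: "K \<ge> 1" and B: "real_of_int (2 * int n ^ 2 * K) \<le> B"
  shows "real_of_int (K + 1) ^ (n^2 - n + 1) * ln (real_of_int (K + 1) + 1) / 2 ^ (n + 1)
    \<le> real n * real (card (mats_with_linear_factor n B))"
proof -
  have "card (params n K) \<le> n * card (param_mat n ` params n K)"
    by (rule card_params_le[OF n K])
  also have "\<dots> \<le> n * card (mats_with_linear_factor n B)"
    using param_mat_mem_mats_with_linear_factor[OF n _ B] K
    by (intro mult_left_mono card_mono finite_mats_with_linear_factor) auto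
  finally have "real (card (params n K)) \<le> real n * real (card (mats_with_linear_factor n B))"
    by (simp flip: of_nat_mult)
  with card_params_ge[OF n K] show ?thesis by linarith
qed

lemma power_ln_le_floor_div:
  fixes a B :: real
  assumes a: "a \<ge> 1" and B: "a ^ 2 \<le> B"
  shows "(B / a) ^ N * ln B
    \<le> 2 * (real_of_int (\<lfloor>B / a\<rfloor> + 1) ^ N * ln (real_of_int (\<lfloor>B / a\<rfloor> + 1) + 1))"
proof -
  define k where "k = real_of_int (\<lfloor>B / a\<rfloor> + 1)"
  have "a \<le> a ^ 2" using a by (simp add: power2_eq_square)
  then have B1: "1 \<le> B" using a B by linarith
  have Ba: "B / a \<le> k" and Ba_pos: "0 < B / a"
    using a B1 real_of_int_floor_add_one_ge[of "B / a"] unfolding k_def by auto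
  have "B \<le> (B / a) ^ 2"
  proof -
    have "B * a ^ 2 \<le> B * B" using B B1 by (intro mult_left_mono) auto
    then show ?thesis using a by (simp add: power_divide pos_le_divide_eq power2_eq_square)
  qed
  then have "ln B \<le> ln ((B / a) ^ 2)"
    using B1 Ba_pos by (subst ln_le_cancel_iff) auto
  also have "\<dots> = 2 * ln (B / a)"
    using Ba_pos by (simp add: ln_realpow)
  also have "\<dots> \<le> 2 * ln (k + 1)"
    using Ba Ba_pos by simp
  finally have "ln B \<le> 2 * ln (k + 1)" .
  moreover have "(B / a) ^ N \<le> k ^ N"
    using Ba Ba_pos by (intro power_mono) auto
  ultimately have "(B / a) ^ N * ln B \<le> k ^ N * (2 * ln (k + 1))"
    using B1 Ba Ba_pos by (intro mult_mono) auto
  then show ?thesis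
    unfolding k_def[symmetric] by simp
qed

lemma card_mats_with_linear_factor_ge_power_ln:
  fixes n :: nat and B :: real
  defines "a \<equiv> 2 * real n ^ 2"
  assumes n: "n \<ge> 2" and B: "a ^ 2 \<le> B"
  shows "B ^ (n^2 - n + 1) * ln B / (real n * 2 ^ (n + 2) * a ^ (n^2 - n + 1))
    \<le> real (card (mats_with_linear_factor n B))"
proof -
  define N where "N = n^2 - n + 1"
  define K where "K = \<lfloor>B / a\<rfloor>"
  define L where "L = real_of_int (K + 1) ^ N * ln (real_of_int (K + 1) + 1)"
  have "1 \<le> real n ^ 2" using n by (intro one_le_power) simp
  then have a: "a \<ge> 1" by (simp add: a_def)
  have "a \<le> B / a" using a B by (simp add: power2_eq_square pos_le_divide_eq)
  then have K: "K \<ge> 1" using a unfolding K_def by linarith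
  have "real_of_int K \<le> B / a" unfolding K_def by (rule of_int_floor_le)
  moreover have "0 < a" using a by simp
  ultimately have "real_of_int K * a \<le> B" by (simp add: pos_le_divide_eq)
  then have KB: "real_of_int (2 * int n ^ 2 * K) \<le> B"
    by (simp add: a_def ac_simps)
  have "B ^ N * ln B / (real n * 2 ^ (n + 2) * a ^ N) = (B / a) ^ N * ln B / (real n * 2 ^ (n + 2))"
    by (simp add: power_divide)
  also have "\<dots> \<le> 2 * L / (real n * 2 ^ (n + 2))"
    using power_ln_le_floor_div[OF a B, of N] unfolding L_def K_def
    by (intro divide_right_mono) auto
  also have "\<dots> = L / 2 ^ (n + 1) / real n"
    by (simp add: field_simps)
  also have "\<dots> \<le> real (card (mats_with_linear_factor n B))"
    using card_mats_with_linear_factor_ge[OF n K KB] n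
    unfolding L_def N_def by (simp add: divide_le_eq ac_simps)
  finally show ?thesis unfolding N_def .
qed

theorem corollary6p6:
  fixes n :: nat
  assumes "n \<ge> 2"
  shows "\<exists>c > 0. \<forall>\<^sub>F (B::real) in at_top.
    real (card {A :: int mat. A \<in> carrier_mat n n \<and>
                 (\<forall>i<n. \<forall>j<n. real_of_int \<bar>A $$ (i, j)\<bar> \<le> B) \<and>
                 (\<exists>q :: int poly. degree q = 1 \<and> q dvd char_poly A)})
      \<ge> c * B ^ (n^2 - n + 1) * ln B"
proof -
  define a where "a = 2 * real n ^ 2"
  define c where "c = 1 / (real n * 2 ^ (n + 2) * a ^ (n^2 - n + 1))"
  have "c > 0" using assms by (simp add: c_def a_def)
  moreover have "\<forall>\<^sub>F B in at_top. c * B ^ (n^2 - n + 1) * ln B \<le> real (card (mats_with_linear_factor n B))"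
    using eventually_ge_at_top[of "a ^ 2"]
  proof (rule eventually_mono)
    fix B assume "a ^ 2 \<le> B"
    then show "c * B ^ (n^2 - n + 1) * ln B \<le> real (card (mats_with_linear_factor n B))"
      using card_mats_with_linear_factor_ge_power_ln[OF assms] unfolding c_def a_def by simp
  qed
  ultimately show ?thesis
    unfolding mats_with_linear_factor_def by auto
qed

end
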